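(* For every positive integer $n$, the average value of the Wiener index over $\overline{\mathcal{G}}_n$ is $$W_{avr}(\overline{\mathcal{G}}_n)=\frac{1}{|\overline{\mathcal{G}}_n|}\sum_{G\in\overline{\mathcal{G}}_n}W(G)=18n^3+18n^2-9n.$$
   Context: The Wiener index is $W(G)=\sum_{\{u,v\}\subseteq V(G)}d_G(u,v)$, $d_G$ the shortest-path distance. A polyphenyl hexagonal chain $\overline{G}_n=\overline{H}_0\cdots\overline{H}_{n-1}$ with $n$ hexagons consists of pairwise vertex-disjoint hexagons (6-cycles) $\overline{H}_0,\dots,\overline{H}_{n-1}$ together with cut-edges: $\overline{G}_1=\overline{H}_0$, and for $k\ge1$, $\overline{G}_{k+1}$ is obtained from $\overline{G}_k$ by adding $\overline{H}_k$ and a cut-edge joining a vertex $c_k$ of $\overline{H}_k$ to a vertex $t_k$ of $\overline{H}_{k-1}$, with $t_k\ne c_{k-1}$ for $k\ge2$. For $1\le i\le n-2$ label $\overline{H}_i$ by $O$, $M$ or $P$ according as the distance in $\overline{H}_i$ between $c_i$ and $t_{i+1}$ is $1$, $2$ or $3$; the word $x_1\cdots x_{n-2}$ over $\{O,M,P\}$ is the code of the chain (empty if $n\le2$). The code determines the chain up to isomorphism, and a code and its reverse describe the same chain. $\overline{\mathcal{G}}_n$ denotes the set of all polyphenyl hexagonal chains with $n$ hexagons, i.e. one chain for each class of codes of length $n-2$ under identification of a word with its reverse (so $|\overline{\mathcal{G}}_n|=\frac12(3^{n-2}+3^{\lfloor (n-1)/2\rfloor})$ for $n\ge2$). *)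

theory Defs
  imports Complex_Main
begin

definition graph_dist :: "('a \<times> 'a) set \<Rightarrow> 'a \<Rightarrow> 'a \<Rightarrow> nat" where
  "graph_dist E u v = (LEAST k. (u, v) \<in> E ^^ k)"

text \<open>Wiener index: sum of distances over unordered pairs of distinct vertices,
  written as half the sum over ordered pairs (distance is symmetric and d(u,u)=0).\<close>

definition wiener :: "'a set \<Rightarrow> ('a \<times> 'a) set \<Rightarrow> real" where
  "wiener V E = (\<Sum>u\<in>V. \<Sum>v\<in>V. real (graph_dist E u v)) / 2"

datatype letter = Ortho | Meta | Para

text \<open>Distance in a hexagon between c_i and t_(i+1) for the label of H_i.\<close>
fun letter_dist :: "letter \<Rightarrow> nat" where
  "letter_dist Ortho = 1" | "letter_dist Meta = 2" | "letter_dist Para = 3"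

text \<open>Vertex (i,j) is vertex j of hexagon H_i, j < 6, vertices of H_i in cyclic order.\<close>
definition chain_vertices :: "nat \<Rightarrow> (nat \<times> nat) set" where
  "chain_vertices n = {0..<n} \<times> {0..<6}"

text \<open>Attachment vertex t_k (in H_(k-1)) for k \<ge> 1: t_1 is vertex 0 of H_0
  (any choice gives an isomorphic chain), and t_k for k \<ge> 2 is at distance
  letter_dist x_(k-1) from c_(k-1) = vertex 0 of H_(k-1). The code word
  x_1 ... x_(n-2) is the list xs, x_i = xs ! (i - 1).  c_k is vertex 0 of H_k.\<close>
definition attach :: "letter list \<Rightarrow> nat \<Rightarrow> nat" where
  "attach xs k = (if k \<le> 1 then 0 else letter_dist (xs ! (k - 2)))"

definition chain_edges0 :: "nat \<Rightarrow> letter list \<Rightarrow> ((nat \<times> nat) \<times> (nat \<times> nat)) set" where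
  "chain_edges0 n xs =
     {((i, j), (i, (j + 1) mod 6)) | i j. i < n \<and> j < 6}
     \<union> {((k - 1, attach xs k), (k, 0)) | k. 1 \<le> k \<and> k < n}"

definition chain_edges :: "nat \<Rightarrow> letter list \<Rightarrow> ((nat \<times> nat) \<times> (nat \<times> nat)) set" where
  "chain_edges n xs = chain_edges0 n xs \<union> (chain_edges0 n xs)\<inverse>"

definition chain_wiener :: "nat \<Rightarrow> letter list \<Rightarrow> real" where
  "chain_wiener n xs = wiener (chain_vertices n) (chain_edges n xs)"

text \<open>The classes of codes of length n-2 under identification of a word with its reverse;
  the set of chains \<G>_n has one chain per class.\<close>
definition code_classes :: "nat \<Rightarrow> letter list set set" where
  "code_classes n = {{w, rev w} | w. length w = n - 2}"

definition avg_wiener :: "nat \<Rightarrow> real" where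
  "avg_wiener n =
     (\<Sum>C\<in>code_classes n. chain_wiener n (SOME w. w \<in> C)) / real (card (code_classes n))"

end

theory Submission
  imports Defs
begin

text \<open>A geodesic between vertices of hexagons \<open>i < j\<close> leaves \<open>H\<^sub>i\<close> at \<open>t\<^sub>i\<^sub>+\<^sub>1\<close>, crosses every
  intermediate hexagon \<open>H\<^sub>k\<close> from \<open>c\<^sub>k\<close> to \<open>t\<^sub>k\<^sub>+\<^sub>1\<close> and enters \<open>H\<^sub>j\<close> at \<open>c\<^sub>j\<close>. Summing over all
  pairs, the Wiener index is \<open>27n + 72n(n - 1)\<close> plus \<open>36\<close> times the sum of the crossing lengths
  \<open>d(c\<^sub>k, t\<^sub>k\<^sub>+\<^sub>1) + 1\<close>, each weighted by the number \<open>k(n - 1 - k)\<close> of pairs of hexagons separated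
  by \<open>H\<^sub>k\<close>. Reversing a code does not change this sum, and exchanging \<open>O\<close> with \<open>P\<close> turns every
  \<open>d(c\<^sub>k, t\<^sub>k\<^sub>+\<^sub>1)\<close> into \<open>4 - d(c\<^sub>k, t\<^sub>k\<^sub>+\<^sub>1)\<close>. So the exchange is an involution on the classes of codes
  under which the Wiener indices of a class and its image always add up to twice the claimed
  average.\<close>

definition hex_dist :: "nat \<Rightarrow> nat \<Rightarrow> nat" where
  "hex_dist a b = min (if a \<le> b then b - a else a - b) (6 - (if a \<le> b then b - a else a - b))"

lemma less_6_cases: "(a::nat) < 6 \<Longrightarrow> a = 0 \<or> a = 1 \<or> a = 2 \<or> a = 3 \<or> a = 4 \<or> a = 5"
  by auto

lemma hex_dist_self [simp]: "hex_dist a a = 0"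
  by (simp add: hex_dist_def)

lemma hex_dist_commute: "hex_dist a b = hex_dist b a"
  by (simp add: hex_dist_def)

lemma hex_dist_succ_le: "a < 6 \<Longrightarrow> b < 6 \<Longrightarrow> hex_dist a ((b + 1) mod 6) \<le> hex_dist a b + 1"
  by (drule less_6_cases, drule less_6_cases, auto simp: hex_dist_def)

lemma hex_dist_le_succ: "a < 6 \<Longrightarrow> b < 6 \<Longrightarrow> hex_dist a b \<le> hex_dist a ((b + 1) mod 6) + 1"
  by (drule less_6_cases, drule less_6_cases, auto simp: hex_dist_def)

lemma hex_dist_step_back:
  "a < 6 \<Longrightarrow> b < 6 \<Longrightarrow> a \<noteq> b \<Longrightarrow>
    hex_dist a ((b + 5) mod 6) + 1 = hex_dist a b \<or> hex_dist a ((b + 1) mod 6) + 1 = hex_dist a b"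
  by (drule less_6_cases, drule less_6_cases, auto simp: hex_dist_def)

lemma sum_hex_dist: "a < 6 \<Longrightarrow> (\<Sum>b<6. hex_dist a b) = 9"
  by (drule less_6_cases, auto simp: hex_dist_def numeral_eq_Suc)

lemma hex_dist_0: "a \<le> 3 \<Longrightarrow> hex_dist 0 a = a"
  by (auto simp: hex_dist_def)

section \<open>Shortest-path distances from a potential\<close>

lemma graph_dist_eqI:
  fixes d :: "'a \<Rightarrow> nat"
  assumes "v \<in> V"
    and source: "d u = 0"
    and edge_le: "\<And>x y. (x, y) \<in> E \<Longrightarrow> d y \<le> d x + 1"
    and step_back: "\<And>w. w \<in> V \<Longrightarrow> w \<noteq> u \<Longrightarrow> \<exists>w'\<in>V. (w', w) \<in> E \<and> d w' + 1 = d w"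
  shows "graph_dist E u v = d v"
proof -
  have walk: "(u, w) \<in> E ^^ d w" if "w \<in> V" for w
    using that
  proof (induction "d w" arbitrary: w)
    case 0
    then have "w = u" using step_back by fastforce
    then show ?case using source by simp
  next
    case (Suc m)
    then have "w \<noteq> u" using source by auto
    then obtain w' where w': "w' \<in> V" "(w', w) \<in> E" "d w' + 1 = d w"
      using step_back Suc.prems by blast
    moreover have "m = d w'" using w'(3) Suc.hyps(2) by simp
    ultimately have "(u, w') \<in> E ^^ m" using Suc.hyps(1) by simp
    then show ?case using w'(2) Suc.hyps(2) by (metis relpow_Suc_I)
  qed
  have lower: "d w \<le> k" if "(u, w) \<in> E ^^ k" for k w
    using that
  proof (induction k arbitrary: w)
    case 0
    then show ?case using source by simp
  next
    case (Suc k)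
    then obtain w' where "(u, w') \<in> E ^^ k" "(w', w) \<in> E" by auto
    with Suc.IH edge_le[of w' w] show ?case by fastforce
  qed
  show ?thesis
    unfolding graph_dist_def using walk[OF \<open>v \<in> V\<close>] lower by (rule Least_equality)
qed

lemma attach_le_3: "attach xs k \<le> 3"
  by (cases "xs ! (k - 2)") (auto simp: attach_def)

lemma attach_less_6: "attach xs k < 6"
  using attach_le_3[of xs k] by simp

text \<open>The length of a passage through \<open>H\<^sub>k\<close>: from \<open>c\<^sub>k = (k, 0)\<close> to \<open>t\<^sub>k\<^sub>+\<^sub>1\<close> and across the
  cut-edge to \<open>c\<^sub>k\<^sub>+\<^sub>1\<close>.\<close>

definition passage :: "letter list \<Rightarrow> nat \<Rightarrow> nat" where
  "passage xs k = hex_dist 0 (attach xs (Suc k)) + 1"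

definition forward_dist :: "letter list \<Rightarrow> nat \<Rightarrow> nat \<Rightarrow> nat \<Rightarrow> nat \<Rightarrow> nat" where
  "forward_dist xs i a j b =
     hex_dist a (attach xs (Suc i)) + 1 + (\<Sum>k\<in>{Suc i..<j}. passage xs k) + hex_dist 0 b"

fun chain_dist :: "letter list \<Rightarrow> nat \<times> nat \<Rightarrow> nat \<times> nat \<Rightarrow> nat" where
  "chain_dist xs (i, a) (j, b) =
     (if i = j then hex_dist a b
      else if i < j then forward_dist xs i a j b else forward_dist xs j b i a)"

text \<open>The vertex of \<open>H\<^sub>j\<close> through which every geodesic from \<open>(i, a)\<close> reaches \<open>H\<^sub>j\<close>.\<close>

definition port :: "letter list \<Rightarrow> nat \<times> nat \<Rightarrow> nat \<Rightarrow> nat" where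
  "port xs u j = (if j = fst u then snd u else if fst u < j then 0 else attach xs (Suc j))"

lemma port_less_6: "a < 6 \<Longrightarrow> port xs (i, a) j < 6"
  by (simp add: port_def attach_less_6)

lemma chain_dist_via_port:
  "chain_dist xs (i, a) (j, b) =
     chain_dist xs (i, a) (j, port xs (i, a) j) + hex_dist (port xs (i, a) j) b"
  by (auto simp: port_def forward_dist_def hex_dist_commute)

lemma chain_dist_cut_edge_forward:
  "i \<le> m \<Longrightarrow> chain_dist xs (i, a) (Suc m, 0) = chain_dist xs (i, a) (m, attach xs (Suc m)) + 1"
  by (cases "i = m") (auto simp: forward_dist_def sum.atLeastLessThan_Suc passage_def)

lemma chain_dist_cut_edge_backward:
  "Suc m \<le> i \<Longrightarrow> chain_dist xs (i, a) (m, attach xs (Suc m)) = chain_dist xs (i, a) (Suc m, 0) + 1"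
  by (cases "i = Suc m")
    (auto simp: forward_dist_def sum.atLeast_Suc_lessThan passage_def hex_dist_commute)

lemma chain_edges_cases:
  assumes "(x, y) \<in> chain_edges n xs"
  obtains (hexagon) p j where "p < n" "j < 6" "x = (p, j)" "y = (p, (j + 1) mod 6)"
  | (hexagon_rev) p j where "p < n" "j < 6" "y = (p, j)" "x = (p, (j + 1) mod 6)"
  | (cut) m where "Suc m < n" "x = (m, attach xs (Suc m))" "y = (Suc m, 0)"
  | (cut_rev) m where "Suc m < n" "y = (m, attach xs (Suc m))" "x = (Suc m, 0)"
  using assms unfolding chain_edges_def chain_edges0_def
  by (auto; metis Suc_diff_1 Suc_le_lessD)

lemma chain_dist_edge_le:
  assumes "(x, y) \<in> chain_edges n xs" "a < 6"
  shows "chain_dist xs (i, a) y \<le> chain_dist xs (i, a) x + 1"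
  using assms(1)
proof (cases rule: chain_edges_cases)
  case (hexagon p j)
  then show ?thesis
    using chain_dist_via_port[of xs i a p j] chain_dist_via_port[of xs i a p "(j + 1) mod 6"]
      hex_dist_succ_le[OF port_less_6[OF assms(2)], of j xs i p] by simp
next
  case (hexagon_rev p j)
  then show ?thesis
    using chain_dist_via_port[of xs i a p j] chain_dist_via_port[of xs i a p "(j + 1) mod 6"]
      hex_dist_le_succ[OF port_less_6[OF assms(2)], of j xs i p] by simp
next
  case (cut m)
  then show ?thesis
    using chain_dist_cut_edge_forward[of i m xs a] chain_dist_cut_edge_backward[of m i xs a]
    by (cases "i \<le> m") auto
next
  case (cut_rev m)
  then show ?thesis
    using chain_dist_cut_edge_forward[of i m xs a] chain_dist_cut_edge_backward[of m i xs a]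
    by (cases "i \<le> m") auto
qed

lemma hexagon_edge_in_chain_edges:
  "p < n \<Longrightarrow> j < 6 \<Longrightarrow> ((p, j), (p, (j + 1) mod 6)) \<in> chain_edges n xs"
  unfolding chain_edges_def chain_edges0_def by blast

lemma hexagon_edge_rev_in_chain_edges:
  "p < n \<Longrightarrow> j < 6 \<Longrightarrow> ((p, (j + 1) mod 6), (p, j)) \<in> chain_edges n xs"
  unfolding chain_edges_def chain_edges0_def by blast

lemma cut_edge_in_chain_edges:
  "Suc m < n \<Longrightarrow> ((m, attach xs (Suc m)), (Suc m, 0)) \<in> chain_edges n xs"
  unfolding chain_edges_def chain_edges0_def by (auto intro!: exI[of _ "Suc m"])

lemma cut_edge_rev_in_chain_edges:
  "Suc m < n \<Longrightarrow> ((Suc m, 0), (m, attach xs (Suc m))) \<in> chain_edges n xs"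
  unfolding chain_edges_def chain_edges0_def by (auto intro!: exI[of _ "Suc m"])

lemma hexagon_step_back:
  assumes "p < n" "b < 6" "c < 6" "c \<noteq> b"
  obtains b' where "b' < 6" "((p, b'), (p, b)) \<in> chain_edges n xs" "hex_dist c b' + 1 = hex_dist c b"
proof -
  have "((b + 5) mod 6 + 1) mod 6 = b" using assms(2) by (drule_tac less_6_cases) auto
  then have "((p, (b + 5) mod 6), (p, b)) \<in> chain_edges n xs"
    using hexagon_edge_in_chain_edges[OF assms(1), of "(b + 5) mod 6" xs] by simp
  then show ?thesis
    using hex_dist_step_back[OF assms(3,2,4)] that[of "(b + 5) mod 6"]
      that[of "(b + 1) mod 6"] hexagon_edge_rev_in_chain_edges[OF assms(1,2), of xs] by auto
qed

lemma chain_dist_step_back: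
  assumes "i < n" "a < 6" "(j, b) \<in> chain_vertices n" "(j, b) \<noteq> (i, a)"
  shows "\<exists>w \<in> chain_vertices n. (w, (j, b)) \<in> chain_edges n xs
           \<and> chain_dist xs (i, a) w + 1 = chain_dist xs (i, a) (j, b)"
proof (cases "b = port xs (i, a) j")
  case False
  have "j < n" "b < 6" using assms(3) by (auto simp: chain_vertices_def)
  with hexagon_step_back[OF this port_less_6[OF assms(2)]] False
  obtain b' where b': "b' < 6" "((j, b'), (j, b)) \<in> chain_edges n xs"
      "hex_dist (port xs (i, a) j) b' + 1 = hex_dist (port xs (i, a) j) b"
    by metis
  then have "chain_dist xs (i, a) (j, b') + 1 = chain_dist xs (i, a) (j, b)"
    using chain_dist_via_port[of xs i a j b] chain_dist_via_port[of xs i a j b'] by simp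
  moreover have "(j, b') \<in> chain_vertices n" using b'(1) \<open>j < n\<close> by (simp add: chain_vertices_def)
  ultimately show ?thesis using b'(2) by blast
next
  case True
  with assms(4) have "j \<noteq> i" by (auto simp: port_def)
  have "j < n" using assms(3) by (simp add: chain_vertices_def)
  show ?thesis
  proof (cases "i < j")
    case True
    then obtain m where m: "j = Suc m" "i \<le> m" by (cases j) auto
    have "b = 0" using \<open>b = port xs (i, a) j\<close> True by (simp add: port_def)
    have "(m, attach xs (Suc m)) \<in> chain_vertices n"
      using m \<open>j < n\<close> attach_less_6 by (simp add: chain_vertices_def)
    then show ?thesis
      using cut_edge_in_chain_edges[of m n xs] chain_dist_cut_edge_forward[OF m(2), of xs a]
        m \<open>b = 0\<close> \<open>j < n\<close> by auto
  next
    case False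
    then have "Suc j \<le> i" using \<open>j \<noteq> i\<close> by simp
    have "b = attach xs (Suc j)" using \<open>b = port xs (i, a) j\<close> False \<open>j \<noteq> i\<close>
      by (simp add: port_def)
    have "(Suc j, 0) \<in> chain_vertices n" using \<open>Suc j \<le> i\<close> assms(1)
      by (simp add: chain_vertices_def)
    then show ?thesis
      using cut_edge_rev_in_chain_edges[of j n xs] chain_dist_cut_edge_backward[OF \<open>Suc j \<le> i\<close>, of xs a]
        \<open>b = attach xs (Suc j)\<close> \<open>Suc j \<le> i\<close> assms(1) by auto
  qed
qed

lemma graph_dist_chain_edges:
  assumes "u \<in> chain_vertices n" "v \<in> chain_vertices n"
  shows "graph_dist (chain_edges n xs) u v = chain_dist xs u v"
proof -
  obtain i a where u: "u = (i, a)" "i < n" "a < 6"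
    using assms(1) by (auto simp: chain_vertices_def)
  show ?thesis
  proof (rule graph_dist_eqI[OF assms(2)])
    show "chain_dist xs u u = 0" by (simp add: u)
    show "chain_dist xs u y \<le> chain_dist xs u x + 1" if "(x, y) \<in> chain_edges n xs" for x y
      using chain_dist_edge_le[OF that u(3)] u(1) by simp
    show "\<exists>w'\<in>chain_vertices n. (w', w) \<in> chain_edges n xs \<and> chain_dist xs u w' + 1 = chain_dist xs u w"
      if "w \<in> chain_vertices n" "w \<noteq> u" for w
      using that chain_dist_step_back[OF u(2,3)] u(1) by (cases w) auto
  qed
qed

section \<open>The Wiener index of a chain\<close>

lemma sum_square_symmetric:
  fixes h :: "nat \<Rightarrow> nat \<Rightarrow> 'a::comm_semiring_1"
  assumes "\<And>i j. h i j = h j i"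
  shows "(\<Sum>i<n. \<Sum>j<n. h i j) = (\<Sum>i<n. h i i) + 2 * (\<Sum>j<n. \<Sum>i<j. h i j)"
proof (induction n)
  case (Suc n)
  have "(\<Sum>i<Suc n. \<Sum>j<Suc n. h i j)
      = (\<Sum>i<n. \<Sum>j<n. h i j) + (\<Sum>i<n. h i n) + (\<Sum>j<n. h n j) + h n n"
    by (simp add: sum.distrib algebra_simps)
  also have "(\<Sum>j<n. h n j) = (\<Sum>i<n. h i n)" using assms by simp
  finally show ?case using Suc.IH by (simp add: algebra_simps mult_2)
qed simp

lemma sum_open_intervals: "(\<Sum>i<j. \<Sum>k\<in>{Suc i..<j}. f k) = (\<Sum>k<j. f k * k)"
  for f :: "nat \<Rightarrow> nat"
proof (induction j)
  case (Suc j)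
  have "(\<Sum>i<Suc j. \<Sum>k\<in>{Suc i..<Suc j}. f k) = (\<Sum>i<j. (\<Sum>k\<in>{Suc i..<j}. f k) + f j)"
    by (auto simp: sum.atLeastLessThan_Suc intro: sum.cong)
  then show ?case using Suc.IH by (simp add: sum.distrib)
qed simp

lemma sum_separated_pairs:
  "(\<Sum>j<n. \<Sum>i<j. \<Sum>k\<in>{Suc i..<j}. f k) = (\<Sum>k<n. f k * k * (n - 1 - k))"
  for f :: "nat \<Rightarrow> nat"
proof (induction n)
  case (Suc n)
  have "(\<Sum>k<n. f k * k * (n - k)) = (\<Sum>k<n. f k * k * (n - 1 - k) + f k * k)"
  proof (intro sum.cong refl)
    fix k assume "k \<in> {..<n}"
    then have "n - k = Suc (n - 1 - k)" by auto
    then show "f k * k * (n - k) = f k * k * (n - 1 - k) + f k * k" by simp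
  qed
  then show ?case using Suc.IH by (simp add: sum.distrib sum_open_intervals)
qed simp

text \<open>\<open>k (n - 1 - k)\<close> is the number of pairs of hexagons \<open>i < k < j\<close>, i.e.\ of geodesics
  crossing \<open>H\<^sub>k\<close>.\<close>

definition crossing_sum :: "letter list \<Rightarrow> nat \<Rightarrow> nat" where
  "crossing_sum xs n = (\<Sum>k<n. passage xs k * k * (n - 1 - k))"

lemma sum_chain_vertices: "(\<Sum>u\<in>chain_vertices n. f u) = (\<Sum>i<n. \<Sum>a<6. f (i, a))"
  by (simp add: chain_vertices_def atLeast0LessThan sum.cartesian_product)

lemma chain_dist_commute: "chain_dist xs u v = chain_dist xs v u"
  by (cases u; cases v) (simp add: hex_dist_commute)

lemma sum_hexagon_pair_dist:
  assumes "i < j"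
  shows "(\<Sum>a<6. \<Sum>b<6. chain_dist xs (i, a) (j, b)) = 144 + 36 * (\<Sum>k\<in>{Suc i..<j}. passage xs k)"
proof -
  have "(\<Sum>a<6. hex_dist a (attach xs (Suc i))) = 9"
    using sum_hex_dist[OF attach_less_6] by (simp add: hex_dist_commute)
  then have "(\<Sum>a<6. \<Sum>b<6. forward_dist xs i a j b) = 144 + 36 * (\<Sum>k\<in>{Suc i..<j}. passage xs k)"
    unfolding forward_dist_def sum.distrib by (simp add: sum_hex_dist sum_distrib_left[symmetric])
  then show ?thesis using assms by simp
qed

lemma chain_wiener_eq_crossing_sum:
  "chain_wiener n xs = 27 * real n + 72 * real n * (real n - 1) + 36 * real (crossing_sum xs n)"
proof -
  define h where "h i j = (\<Sum>a<6. \<Sum>b<6. chain_dist xs (i, a) (j, b))" for i j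
  have h_commute: "h i j = h j i" for i j
    unfolding h_def by (subst sum.swap) (intro sum.cong refl chain_dist_commute)
  have "(\<Sum>u\<in>chain_vertices n. \<Sum>v\<in>chain_vertices n. chain_dist xs u v)
      = (\<Sum>i<n. \<Sum>a<6. \<Sum>j<n. \<Sum>b<6. chain_dist xs (i, a) (j, b))"
    by (simp only: sum_chain_vertices)
  also have "\<dots> = (\<Sum>i<n. \<Sum>j<n. h i j)"
    unfolding h_def by (intro sum.cong refl sum.swap)
  also have "\<dots> = (\<Sum>i<n. h i i) + 2 * (\<Sum>j<n. \<Sum>i<j. h i j)"
    using sum_square_symmetric h_commute by blast
  also have "(\<Sum>i<n. h i i) = 54 * n"
    by (simp add: h_def sum_hex_dist)
  also have "(\<Sum>j<n. \<Sum>i<j. h i j)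
      = (\<Sum>j<n. 144 * j) + 36 * (\<Sum>j<n. \<Sum>i<j. \<Sum>k\<in>{Suc i..<j}. passage xs k)"
    by (simp add: h_def sum_hexagon_pair_dist sum.distrib sum_distrib_left mult.commute
        del: chain_dist.simps)
  also have "\<dots> = 144 * (\<Sum>j<n. j) + 36 * crossing_sum xs n"
    by (simp only: sum_distrib_left[symmetric] sum_separated_pairs crossing_sum_def)
  finally have sum_dist: "(\<Sum>u\<in>chain_vertices n. \<Sum>v\<in>chain_vertices n. chain_dist xs u v)
      = 54 * n + 2 * (144 * (\<Sum>j<n. j) + 36 * crossing_sum xs n)" .
  have gauss: "real (\<Sum>j<n. j) = real n * (real n - 1) / 2"
    by (induction n) (auto simp: field_simps)
  have "chain_wiener n xs = real (\<Sum>u\<in>chain_vertices n. \<Sum>v\<in>chain_vertices n. chain_dist xs u v) / 2"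
    unfolding chain_wiener_def wiener_def by (simp add: graph_dist_chain_edges)
  then show ?thesis unfolding sum_dist using gauss by (simp add: field_simps)
qed

section \<open>Reversing a code and exchanging ortho with para\<close>

lemma passage_eq_letter_dist: "1 \<le> k \<Longrightarrow> passage xs k = letter_dist (xs ! (k - 1)) + 1"
  using attach_le_3[of xs "Suc k"] by (simp add: passage_def attach_def hex_dist_0 numeral_2_eq_2)

lemma crossing_sum_rev:
  assumes "length w = n - 2"
  shows "crossing_sum (rev w) n = crossing_sum w n"
proof -
  have "crossing_sum (rev w) n = (\<Sum>k<n. passage (rev w) (n - Suc k) * (n - Suc k) * (n - 1 - (n - Suc k)))"
    unfolding crossing_sum_def by (rule sum.nat_diff_reindex[symmetric])
  also have "\<dots> = crossing_sum w n"
    unfolding crossing_sum_def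
  proof (intro sum.cong refl)
    fix k assume k: "k \<in> {..<n}"
    show "passage (rev w) (n - Suc k) * (n - Suc k) * (n - 1 - (n - Suc k)) = passage w k * k * (n - 1 - k)"
    proof (cases "k = 0 \<or> k = n - 1")
      case False
      then have "1 \<le> k" "1 \<le> n - Suc k" "n - Suc k - 1 < length w"
          "length w - Suc (n - Suc k - 1) = k - 1"
        using k assms by auto
      then have "passage (rev w) (n - Suc k) = passage w k"
        by (simp add: passage_eq_letter_dist rev_nth)
      moreover have "n - 1 - (n - Suc k) = k" using k by auto
      ultimately show ?thesis by simp
    qed (use k in auto)
  qed
  finally show ?thesis .
qed

fun opposite :: "letter \<Rightarrow> letter" where
  "opposite Ortho = Para"
| "opposite Meta = Meta"
| "opposite Para = Ortho"

lemma opposite_comp_opposite [simp]: "opposite \<circ> opposite = id"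
  by (rule ext, case_tac x) auto

lemma letter_dist_add_opposite: "letter_dist x + letter_dist (opposite x) = 4"
  by (cases x) auto

lemma crossing_sum_add_opposite:
  assumes "length w = n - 2"
  shows "crossing_sum w n + crossing_sum (map opposite w) n = 6 * (\<Sum>k<n. k * (n - 1 - k))"
proof -
  have "crossing_sum w n + crossing_sum (map opposite w) n
      = (\<Sum>k<n. (passage w k + passage (map opposite w) k) * k * (n - 1 - k))"
    unfolding crossing_sum_def by (simp add: sum.distrib[symmetric] algebra_simps)
  also have "\<dots> = (\<Sum>k<n. 6 * (k * (n - 1 - k)))"
  proof (intro sum.cong refl)
    fix k assume k: "k \<in> {..<n}"
    show "(passage w k + passage (map opposite w) k) * k * (n - 1 - k) = 6 * (k * (n - 1 - k))"
    proof (cases "k = 0 \<or> k = n - 1")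
      case False
      then have "1 \<le> k" "k - 1 < length w" using k assms by auto
      then have "passage w k + passage (map opposite w) k = 6"
        using letter_dist_add_opposite[of "w ! (k - 1)"] by (simp add: passage_eq_letter_dist)
      then show ?thesis by simp
    qed (use k in auto)
  qed
  finally show ?thesis by (simp add: sum_distrib_left)
qed

lemma sum_separations: "real (\<Sum>k<n. k * (n - 1 - k)) = real n * (real n - 1) * (real n - 2) / 6"
proof (induction n)
  case (Suc n)
  have "(\<Sum>k<Suc n. k * (Suc n - 1 - k)) = (\<Sum>k<n. k * (n - k))"
    by simp
  also have "\<dots> = (\<Sum>k<n. k * (n - 1 - k) + k)"
  proof (intro sum.cong refl)
    fix k assume "k \<in> {..<n}"
    then have "n - k = Suc (n - 1 - k)" by auto
    then show "k * (n - k) = k * (n - 1 - k) + k" by simp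
  qed
  finally have "real (\<Sum>k<Suc n. k * (Suc n - 1 - k)) = real (\<Sum>k<n. k * (n - 1 - k)) + real (\<Sum>k<n. k)"
    by (simp add: sum.distrib)
  moreover have "real (\<Sum>k<n. k) = real n * (real n - 1) / 2"
    by (induction n) (auto simp: field_simps)
  ultimately show ?case using Suc.IH by (simp add: field_simps)
qed simp

lemma chain_wiener_add_opposite:
  assumes "length w = n - 2"
  shows "chain_wiener n w + chain_wiener n (map opposite w)
         = 2 * (18 * real n ^ 3 + 18 * real n ^ 2 - 9 * real n)"
proof -
  have "real (crossing_sum w n) + real (crossing_sum (map opposite w) n)
      = real n * (real n - 1) * (real n - 2)"
    using arg_cong[OF crossing_sum_add_opposite[OF assms], of real] sum_separations[of n] by simp
  then show ?thesis
    unfolding chain_wiener_eq_crossing_sum by (simp add: algebra_simps power3_eq_cube power2_eq_square)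
qed

lemma sum_involution_pairs:
  fixes f :: "'a \<Rightarrow> 'b::field_char_0"
  assumes "\<And>x. x \<in> S \<Longrightarrow> \<phi> x \<in> S"
    and "\<And>x. x \<in> S \<Longrightarrow> \<phi> (\<phi> x) = x"
    and "\<And>x. x \<in> S \<Longrightarrow> f x + f (\<phi> x) = 2 * c"
  shows "sum f S = of_nat (card S) * c"
proof -
  have "(\<Sum>x\<in>S. f (\<phi> x)) = sum f S"
    by (rule sum.reindex_bij_witness[where i = \<phi> and j = \<phi>]) (use assms(1,2) in auto)
  then have "2 * sum f S = (\<Sum>x\<in>S. f x + f (\<phi> x))"
    by (simp only: sum.distrib mult_2)
  also have "\<dots> = 2 * (of_nat (card S) * c)"
    using assms(3) by (simp add: sum_distrib_left)
  finally show ?thesis by simp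
qed

lemma code_classesE:
  assumes "C \<in> code_classes n"
  obtains w where "C = {w, rev w}" "length w = n - 2"
  using assms unfolding code_classes_def by auto

lemma chain_wiener_rev: "length w = n - 2 \<Longrightarrow> chain_wiener n (rev w) = chain_wiener n w"
  by (simp add: chain_wiener_eq_crossing_sum crossing_sum_rev)

lemma chain_wiener_some_code:
  assumes "C \<in> code_classes n" "w \<in> C"
  shows "chain_wiener n (SOME w. w \<in> C) = chain_wiener n w"
proof -
  obtain v where v: "C = {v, rev v}" "length v = n - 2"
    using assms(1) by (rule code_classesE)
  have "(SOME w. w \<in> C) \<in> C" using assms(2) by (rule someI)
  then show ?thesis using assms(2) v chain_wiener_rev[OF v(2)] by auto
qed

lemma some_in_code_class: "C \<in> code_classes n \<Longrightarrow> (SOME w. w \<in> C) \<in> C"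
  by (erule code_classesE, rule someI_ex, blast)

lemma length_in_code_class: "C \<in> code_classes n \<Longrightarrow> w \<in> C \<Longrightarrow> length w = n - 2"
  by (erule code_classesE) auto

lemma map_opposite_code_class: "C \<in> code_classes n \<Longrightarrow> map opposite ` C \<in> code_classes n"
  by (erule code_classesE) (auto simp: code_classes_def rev_map)

lemma finite_code_classes: "finite (code_classes n)"
proof -
  have "finite (UNIV :: letter set)"
    by (rule finite_subset[of _ "{Ortho, Meta, Para}"]) (use letter.exhaust in auto)
  then have "finite {w :: letter list. set w \<subseteq> UNIV \<and> length w = n - 2}"
    by (rule finite_lists_length_eq)
  moreover have "code_classes n \<subseteq> (\<lambda>w. {w, rev w}) ` {w. set w \<subseteq> UNIV \<and> length w = n - 2}"
    unfolding code_classes_def by blast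
  ultimately show ?thesis using finite_subset by blast
qed

lemma card_code_classes_pos: "card (code_classes n) > 0"
proof -
  have "{replicate (n - 2) Ortho, rev (replicate (n - 2) Ortho)} \<in> code_classes n"
    unfolding code_classes_def by force
  then show ?thesis using finite_code_classes card_gt_0_iff by blast
qed

theorem theorem5p3:
  fixes n :: nat
  assumes "n \<ge> 1"
  shows "avg_wiener n = 18 * real n ^ 3 + 18 * real n ^ 2 - 9 * real n"
proof -
  have "(\<Sum>C\<in>code_classes n. chain_wiener n (SOME w. w \<in> C))
      = real (card (code_classes n)) * (18 * real n ^ 3 + 18 * real n ^ 2 - 9 * real n)"
  proof (rule sum_involution_pairs[where \<phi> = "image (map opposite)"])
    fix C assume C: "C \<in> code_classes n"
    show "map opposite ` C \<in> code_classes n" using C by (rule map_opposite_code_class)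
    show "map opposite ` map opposite ` C = C" by (simp add: image_comp)
    have some_C: "(SOME w. w \<in> C) \<in> C" using C by (rule some_in_code_class)
    then have "chain_wiener n (SOME w. w \<in> map opposite ` C) = chain_wiener n (map opposite (SOME w. w \<in> C))"
      by (intro chain_wiener_some_code map_opposite_code_class[OF C] imageI)
    then show "chain_wiener n (SOME w. w \<in> C) + chain_wiener n (SOME w. w \<in> map opposite ` C)
        = 2 * (18 * real n ^ 3 + 18 * real n ^ 2 - 9 * real n)"
      using chain_wiener_add_opposite[OF length_in_code_class[OF C some_C]] by simp
  qed
  then show ?thesis
    unfolding avg_wiener_def using card_code_classes_pos[of n] by simp
qed

end
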